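(* Let $0<\beta<1$ and suppose $Y$ has a continuous distribution with support $\mathcal{Y}$, and that: (i) $\operatorname{int}(\mathcal{Y})\cap\operatorname{int}(\mathcal{R}_{\mathcal{X}})$ is connected; (ii) $y\mapsto f(x,y)$ is continuous for every $x\in\mathcal{X}$; (iii) for each $x\in\mathcal{X}$ there exists $x'\in\mathcal{X}$ such that $\operatorname{int}(\mathcal{Y})\cap\operatorname{int}(\mathcal{R}_x\cap\mathcal{R}_{x'})\neq\emptyset$ and $\operatorname{int}(\mathcal{Y})\cap\operatorname{int}(\mathcal{R}_{x'}\setminus\mathcal{R}_x)\neq\emptyset$. Then $\mathcal{R}_{\mathcal{X}}$ satisfies the $\beta$-aggregation condition.
   Context: Let $(\Omega,\mathcal{F},\mathbb{P})$ be a probability space, $Y$ a random vector in $\mathbb{R}^d$ with support $\mathcal{Y}$, $\mathcal{X}\subseteq\mathbb{R}^k$ a set of decisions and $f:\mathcal{X}\times\mathbb{R}^d\to\mathbb{R}$ a loss function with $f(x,Y)$ measurable for all $x$. Write $F_x(z)=\mathbb{P}(f(x,Y)\le z)$ and $F_x^{-1}(\beta)=\inf\{z: F_x(z)\ge\beta\}$. The ($\beta$-)risk region of $x$ is $\mathcal{R}_x=\{y\in\mathbb{R}^d: f(x,y)\ge F_x^{-1}(\beta)\}$ and $\mathcal{R}_{\mathcal{X}}=\bigcup_{x\in\mathcal{X}}\mathcal{R}_x$. A set $\mathcal{R}$ with $\mathcal{R}_{\mathcal{X}}\subseteq\mathcal{R}\subset\mathbb{R}^d$ satisfies the $\beta$-aggregation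 condition if for all $x\in\mathcal{X}$ and all $z'<F_x^{-1}(\beta)$, $\mathbb{P}\big(Y\in\{y: z'<f(x,y)\le F_x^{-1}(\beta)\}\cap\mathcal{R}\big)>0$. $\operatorname{int}$ denotes topological interior. *)

theory Defs
  imports "HOL-Probability.Probability"
begin

definition loss_cdf :: "'w measure \<Rightarrow> ('w \<Rightarrow> 'a) \<Rightarrow> ('b \<Rightarrow> 'a \<Rightarrow> real) \<Rightarrow> 'b \<Rightarrow> real \<Rightarrow> real" where
  "loss_cdf M Y f x z = measure M {w \<in> space M. f x (Y w) \<le> z}"

definition loss_quantile :: "'w measure \<Rightarrow> ('w \<Rightarrow> 'a) \<Rightarrow> ('b \<Rightarrow> 'a \<Rightarrow> real) \<Rightarrow> real \<Rightarrow> 'b \<Rightarrow> real" where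
  "loss_quantile M Y f \<beta> x = Inf {z. loss_cdf M Y f x z \<ge> \<beta>}"

definition risk_region :: "'w measure \<Rightarrow> ('w \<Rightarrow> 'a) \<Rightarrow> ('b \<Rightarrow> 'a \<Rightarrow> real) \<Rightarrow> real \<Rightarrow> 'b \<Rightarrow> 'a set" where
  "risk_region M Y f \<beta> x = {y. f x y \<ge> loss_quantile M Y f \<beta> x}"

definition risk_region_set :: "'w measure \<Rightarrow> ('w \<Rightarrow> 'a) \<Rightarrow> ('b \<Rightarrow> 'a \<Rightarrow> real) \<Rightarrow> real \<Rightarrow> 'b set \<Rightarrow> 'a set" where
  "risk_region_set M Y f \<beta> X = (\<Union>x\<in>X. risk_region M Y f \<beta> x)"

text \<open>Support of the distribution of Y: points all of whose neighbourhoods have positive probability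
  (the smallest closed set of full measure).\<close>
definition rv_support :: "'w measure \<Rightarrow> ('w \<Rightarrow> 'a::metric_space) \<Rightarrow> 'a set" where
  "rv_support M Y = {y. \<forall>e>0. measure M (Y -` ball y e \<inter> space M) > 0}"

text \<open>Positive probability of the event {Y \<in> A}; stated via a measurable sub-event so that it also
  makes sense if {Y \<in> A} is not measurable (for measurable events it is just P(Y \<in> A) > 0).\<close>
definition pos_prob_event :: "'w measure \<Rightarrow> ('w \<Rightarrow> 'a) \<Rightarrow> 'a set \<Rightarrow> bool" where
  "pos_prob_event M Y A = (\<exists>E\<in>sets M. E \<subseteq> {w \<in> space M. Y w \<in> A} \<and> measure M E > 0)"

definition aggregation_condition :: "'w measure \<Rightarrow> ('w \<Rightarrow> 'a) \<Rightarrow> ('b \<Rightarrow> 'a \<Rightarrow> real) \<Rightarrow> real \<Rightarrow> 'b set \<Rightarrow> 'a set \<Rightarrow> bool" where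
  "aggregation_condition M Y f \<beta> X R \<longleftrightarrow>
     risk_region_set M Y f \<beta> X \<subseteq> R \<and>
     (\<forall>x\<in>X. \<forall>z'. z' < loss_quantile M Y f \<beta> x \<longrightarrow>
        pos_prob_event M Y ({y. z' < f x y \<and> f x y \<le> loss_quantile M Y f \<beta> x} \<inter> R))"

end

theory Submission
  imports Defs
begin

text \<open>Fix \<open>x\<close> and \<open>z' < q = F\<^sub>x\<^sup>-\<^sup>1(\<beta>)\<close>. Hypothesis (iii) gives points of the open connected set
  \<open>S = int \<Y> \<inter> int \<R>\<^sub>\<X>\<close> where \<open>f x\<close> is \<open>\<ge> q\<close> (in \<open>\<R>\<^sub>x \<inter> \<R>\<^sub>x\<^sub>'\<close>) and \<open>< q\<close> (in \<open>\<R>\<^sub>x\<^sub>' - \<R>\<^sub>x\<close>).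
  By the intermediate value theorem \<open>f x\<close> takes a value strictly between \<open>z'\<close> and \<open>q\<close> somewhere
  in \<open>S\<close>, and by continuity on a whole ball around that point. The ball lies in \<open>\<R>\<^sub>\<X>\<close> and
  is centred in the support of \<open>Y\<close>, so it has positive probability. Only (i)--(iii) and the
  measurability of \<open>Y\<close> are needed.\<close>

lemma pos_prob_event_if_interior_support:
  fixes Y :: "'w \<Rightarrow> 'a::metric_space"
  assumes "Y \<in> borel_measurable M"
    and "y \<in> rv_support M Y" and "y \<in> interior A"
  shows "pos_prob_event M Y A"
proof -
  obtain e where "e > 0" and ball: "ball y e \<subseteq> A"
    using \<open>y \<in> interior A\<close> by (meson mem_interior)
  let ?E = "Y -` ball y e \<inter> space M"
  have "?E \<in> sets M"
    using measurable_sets[OF assms(1)] by simp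
  moreover have "measure M ?E > 0"
    using \<open>y \<in> rv_support M Y\<close> \<open>e > 0\<close> unfolding rv_support_def by blast
  moreover have "?E \<subseteq> {w \<in> space M. Y w \<in> A}"
    using ball by blast
  ultimately show ?thesis
    unfolding pos_prob_event_def by blast
qed

lemma connected_open_meets_interior_level_band:
  fixes g :: "'a::topological_space \<Rightarrow> real"
  assumes "connected S" and "open S" and "continuous_on S g"
    and "y1 \<in> S" and "y2 \<in> S" and "g y1 < b" and "a < b" and "b \<le> g y2"
  shows "\<exists>y\<in>S. y \<in> interior {y. a < g y \<and> g y \<le> b}"
proof -
  define c where "c = (max a (g y1) + b) / 2"
  have c: "a < c" "g y1 < c" "c < b"
    using assms(6,7) unfolding c_def by (auto simp: max_def)
  have "c \<in> g ` S"
    using connectedD_interval[OF connected_continuous_image[OF assms(3,1)]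
        imageI[OF assms(4)] imageI[OF assms(5)]] c assms(8) by simp
  then obtain y where "y \<in> S" and "g y = c"
    by blast
  have "open (g -` {a<..<b} \<inter> S)"
    using assms(3) continuous_on_open_vimage[OF assms(2)] open_greaterThanLessThan by metis
  moreover have "y \<in> g -` {a<..<b} \<inter> S"
    using \<open>y \<in> S\<close> \<open>g y = c\<close> c by simp
  moreover have "g -` {a<..<b} \<inter> S \<subseteq> {y. a < g y \<and> g y \<le> b}"
    by auto
  ultimately have "y \<in> interior {y. a < g y \<and> g y \<le> b}"
    using interior_maximal by blast
  with \<open>y \<in> S\<close> show ?thesis
    by blast
qed

lemma risk_regions_straddle_quantile:
  assumes "x \<in> X" and "x' \<in> X"
    and "T \<inter> interior (risk_region M Y f \<beta> x \<inter> risk_region M Y f \<beta> x') \<noteq> {}"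
    and "T \<inter> interior (risk_region M Y f \<beta> x' - risk_region M Y f \<beta> x) \<noteq> {}"
  obtains y1 y2
  where "y1 \<in> T \<inter> interior (risk_region_set M Y f \<beta> X)" "f x y1 < loss_quantile M Y f \<beta> x"
    and "y2 \<in> T \<inter> interior (risk_region_set M Y f \<beta> X)" "loss_quantile M Y f \<beta> x \<le> f x y2"
proof -
  let ?R = "risk_region M Y f \<beta>"
  have "?R x \<inter> ?R x' \<subseteq> risk_region_set M Y f \<beta> X" "?R x' - ?R x \<subseteq> risk_region_set M Y f \<beta> X"
    using assms(1,2) unfolding risk_region_set_def by blast+
  note interior_R = this[THEN interior_mono]
  obtain y1 where y1: "y1 \<in> T" "y1 \<in> interior (?R x' - ?R x)"
    using assms(4) by blast
  obtain y2 where y2: "y2 \<in> T" "y2 \<in> interior (?R x \<inter> ?R x')"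
    using assms(3) by blast
  have "y1 \<notin> ?R x" "y2 \<in> ?R x"
    using y1(2) y2(2) interior_subset[of "?R x' - ?R x"] interior_subset[of "?R x \<inter> ?R x'"] by blast+
  then have "f x y1 < loss_quantile M Y f \<beta> x" "loss_quantile M Y f \<beta> x \<le> f x y2"
    unfolding risk_region_def by simp_all
  moreover have "y1 \<in> T \<inter> interior (risk_region_set M Y f \<beta> X)" "y2 \<in> T \<inter> interior (risk_region_set M Y f \<beta> X)"
    using y1 y2 interior_R by blast+
  ultimately show ?thesis
    using that by blast
qed

theorem mainTheorem3:
  fixes M :: "'w measure" and Y :: "'w \<Rightarrow> 'a::euclidean_space"
    and f :: "'b::euclidean_space \<Rightarrow> 'a \<Rightarrow> real" and X :: "'b set" and \<beta> :: real
  assumes "prob_space M"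
    and "Y \<in> borel_measurable M"
    and "\<And>x. (\<lambda>w. f x (Y w)) \<in> borel_measurable M"
    and "0 < \<beta>" and "\<beta> < 1"
    and "\<And>y. measure M {w \<in> space M. Y w = y} = 0"
    and "connected (interior (rv_support M Y) \<inter> interior (risk_region_set M Y f \<beta> X))"
    and "\<And>x. x \<in> X \<Longrightarrow> continuous_on UNIV (f x)"
    and "\<And>x. x \<in> X \<Longrightarrow> \<exists>x'\<in>X.
           interior (rv_support M Y) \<inter> interior (risk_region M Y f \<beta> x \<inter> risk_region M Y f \<beta> x') \<noteq> {} \<and>
           interior (rv_support M Y) \<inter> interior (risk_region M Y f \<beta> x' - risk_region M Y f \<beta> x) \<noteq> {}"
  shows "aggregation_condition M Y f \<beta> X (risk_region_set M Y f \<beta> X)"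
  unfolding aggregation_condition_def
proof (intro conjI ballI allI impI subset_refl)
  fix x z'
  assume "x \<in> X" and z': "z' < loss_quantile M Y f \<beta> x"
  let ?q = "loss_quantile M Y f \<beta> x" and ?R = "risk_region M Y f \<beta>"
  let ?S = "interior (rv_support M Y) \<inter> interior (risk_region_set M Y f \<beta> X)"
  obtain x' where "x' \<in> X"
    and "interior (rv_support M Y) \<inter> interior (?R x \<inter> ?R x') \<noteq> {}"
    and "interior (rv_support M Y) \<inter> interior (?R x' - ?R x) \<noteq> {}"
    using assms(9)[OF \<open>x \<in> X\<close>] by blast
  then obtain y1 y2 where "y1 \<in> ?S" "f x y1 < ?q" "y2 \<in> ?S" "?q \<le> f x y2"
    using risk_regions_straddle_quantile[OF \<open>x \<in> X\<close>] by metis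
  have "continuous_on ?S (f x)"
    using continuous_on_subset[OF assms(8)[OF \<open>x \<in> X\<close>]] by simp
  then obtain y where "y \<in> ?S" and "y \<in> interior {y. z' < f x y \<and> f x y \<le> ?q}"
    using connected_open_meets_interior_level_band[OF assms(7) open_Int[OF open_interior open_interior]
        _ \<open>y1 \<in> ?S\<close> \<open>y2 \<in> ?S\<close> \<open>f x y1 < ?q\<close> z' \<open>?q \<le> f x y2\<close>]
    by blast
  then have "y \<in> interior ({y. z' < f x y \<and> f x y \<le> ?q} \<inter> risk_region_set M Y f \<beta> X)"
    by (simp add: interior_Int)
  moreover have "y \<in> rv_support M Y"
    using \<open>y \<in> ?S\<close> interior_subset by blast
  ultimately show "pos_prob_event M Y ({y. z' < f x y \<and> f x y \<le> ?q} \<inter> risk_region_set M Y f \<beta> X)"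
    using pos_prob_event_if_interior_support[OF assms(2)] by blast
qed

end
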